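(* Let $q$ be a power of an odd prime, $c\in\mathbb{F}_q^*$, and $f(X)=c(X^{q+1}-X^2)$ on $\mathbb{F}_{q^2}$. Every cycle of the functional graph of $f$ whose length is greater than $1$ has even length.
   Context: The functional graph of $f$ is the directed graph on $\mathbb{F}_{q^2}$ with edges $x\to f(x)$; a cycle of length $n$ is a set of $n$ distinct elements $\alpha, f(\alpha),\dots,f^{(n-1)}(\alpha)$ with $f^{(n)}(\alpha)=\alpha$. *)

theory Defs
  imports Main "HOL-Computational_Algebra.Primes"
begin

end

theory Submission
  imports Defs "HOL-Number_Theory.Residues"
begin

text \<open>
  On the field with \<open>q\<^sup>2\<close> elements, \<open>\<sigma> x = x ^ q\<close> is an involutive automorphism
  fixing \<open>c\<close>, and \<open>f x = - c x (x - \<sigma> x)\<close>. Writing \<open>s = x + \<sigma> x\<close> and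
  \<open>d = x - \<sigma> x\<close>, one computes \<open>s (f x) = - c d\<^sup>2\<close> and \<open>d (f x) = - c d s\<close>, so \<open>f\<close>
  inverts the ratio \<open>s / d\<close>. Around a cycle of odd length the ratio therefore equals its
  own inverse. It cannot be \<open>\<plusminus>1\<close> in odd characteristic, so it is \<open>0\<close>; then \<open>f x\<close> is
  fixed by \<open>\<sigma>\<close>, whence \<open>f (f x) = 0\<close>, and the cycle is the fixed point \<open>0\<close>.
\<close>

lemma power_card_eq_self:
  fixes x :: "'a::{field,finite}"
  shows "x ^ card (UNIV :: 'a set) = x"
proof (cases "x = 0")
  case True
  then show ?thesis
    using finite_UNIV_card_ge_0[where ?'a = 'a] by simp
next
  case False
  let ?U = "UNIV - {0::'a}"
  have "inj_on ((*) x) ?U"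
    using False by (auto intro: inj_onI)
  moreover have "(*) x ` ?U = ?U"
  proof
    show "?U \<subseteq> (*) x ` ?U"
    proof
      fix y :: 'a
      assume "y \<in> ?U"
      then show "y \<in> (*) x ` ?U"
        using False by (intro image_eqI[of _ _ "y / x"]) auto
    qed
  qed (use False in auto)
  ultimately have "(\<Prod>y\<in>?U. x * y) = \<Prod>?U"
    using prod.reindex[of "(*) x" ?U id] by simp
  then have "x ^ card ?U * \<Prod>?U = 1 * \<Prod>?U"
    by (simp add: prod.distrib)
  moreover have "\<Prod>?U \<noteq> 0"
    by simp
  ultimately have "x ^ card ?U = 1"
    by (metis mult_right_cancel)
  moreover have "card (UNIV :: 'a set) = Suc (card ?U)"
    using finite_UNIV_card_ge_0[where ?'a = 'a] by (simp add: card_Diff_singleton)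
  ultimately show ?thesis
    by (simp only: power_Suc mult_1_right)
qed

lemma prime_CHAR_finite_field: "prime CHAR('a::{field,finite})"
  by (intro prime_CHAR_semidom finite_imp_CHAR_pos finite_UNIV)

lemma CHAR_eq_prime_if_card_eq_prime_power:
  assumes "prime p" and "card (UNIV :: 'a::{field,finite} set) = p ^ m"
  shows "CHAR('a) = p"
proof -
  have "CHAR('a) dvd p ^ m"
    using CHAR_dvd_CARD[where ?'a = 'a] assms(2) by simp
  then show ?thesis
    using prime_CHAR_finite_field[where ?'a = 'a] assms(1) prime_dvd_power primes_dvd_imp_eq
    by blast
qed

lemma two_neq_zero_if_odd_CHAR:
  assumes "odd CHAR('a::semiring_1)"
  shows "(2::'a) \<noteq> 0"
proof
  assume "(2::'a) = 0"
  then have dvd2: "CHAR('a) dvd 2"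
    using of_nat_eq_0_iff_char_dvd[of 2, where ?'a = 'a] by simp
  then have "CHAR('a) \<le> 2"
    by (simp add: dvd_imp_le)
  moreover have "CHAR('a) \<noteq> 0"
    using dvd2 by (metis dvd_0_left_iff zero_neq_numeral)
  ultimately show False
    using assms CHAR_not_1[where ?'a = 'a] by presburger
qed

locale field_involution =
  fixes \<sigma> :: "'a::field \<Rightarrow> 'a"
  assumes add: "\<sigma> (x + y) = \<sigma> x + \<sigma> y"
    and mult: "\<sigma> (x * y) = \<sigma> x * \<sigma> y"
    and involutive: "\<sigma> (\<sigma> x) = x"
begin

lemma zero [simp]: "\<sigma> 0 = 0"
  using add[of 0 0] by (simp only: add_0 add_cancel_right_right)

lemma diff: "\<sigma> (x - y) = \<sigma> x - \<sigma> y"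
  using add[of "x - y" y] by (simp add: algebra_simps)

definition quad_map :: "'a \<Rightarrow> 'a \<Rightarrow> 'a" where
  "quad_map c x = c * (x * \<sigma> x - x ^ 2)"

text \<open>With the junk values \<open>a / 0 = 0\<close> and \<open>inverse 0 = 0\<close>, \<open>quad_map c\<close> inverts this
  ratio also where numerator or denominator vanish.\<close>
definition ratio :: "'a \<Rightarrow> 'a" where
  "ratio x = (x + \<sigma> x) / (x - \<sigma> x)"

lemma quad_map_0 [simp]: "quad_map c 0 = 0"
  by (simp add: quad_map_def)

lemma funpow_quad_map_0 [simp]: "(quad_map c ^^ m) 0 = 0"
  by (induction m) simp_all

lemma quad_map_trace_and_difference:
  assumes "\<sigma> c = c"
  shows "quad_map c x + \<sigma> (quad_map c x) = - c * (x - \<sigma> x) ^ 2"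
    and "quad_map c x - \<sigma> (quad_map c x) = - c * (x - \<sigma> x) * (x + \<sigma> x)"
proof -
  have "\<sigma> (quad_map c x) = c * (\<sigma> x * x - \<sigma> x ^ 2)"
    by (simp add: quad_map_def mult diff assms involutive power2_eq_square)
  then show "quad_map c x + \<sigma> (quad_map c x) = - c * (x - \<sigma> x) ^ 2"
    and "quad_map c x - \<sigma> (quad_map c x) = - c * (x - \<sigma> x) * (x + \<sigma> x)"
    by (simp_all add: quad_map_def algebra_simps power2_eq_square)
qed

lemma ratio_quad_map:
  assumes "\<sigma> c = c" and "c \<noteq> 0"
  shows "ratio (quad_map c x) = inverse (ratio x)"
proof -
  have "ratio (quad_map c x) = (c * (x - \<sigma> x) * (x - \<sigma> x)) / (c * (x - \<sigma> x) * (x + \<sigma> x))"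
    by (simp add: ratio_def quad_map_trace_and_difference[OF assms(1)] power2_eq_square)
  also have "\<dots> = (x - \<sigma> x) / (x + \<sigma> x)"
    using assms(2) by (cases "x - \<sigma> x = 0") simp_all
  finally show ?thesis
    by (simp add: ratio_def)
qed

lemma ratio_funpow_quad_map:
  assumes "\<sigma> c = c" and "c \<noteq> 0"
  shows "ratio ((quad_map c ^^ m) x) = (if even m then ratio x else inverse (ratio x))"
  by (induction m) (simp_all add: ratio_quad_map[OF assms])

lemma ratio_square_neq_1:
  assumes "(2::'a) \<noteq> 0"
  shows "ratio x ^ 2 \<noteq> 1"
proof
  assume "ratio x ^ 2 = 1"
  then have "x - \<sigma> x \<noteq> 0" and "(x + \<sigma> x) ^ 2 = (x - \<sigma> x) ^ 2"
    by (auto simp: ratio_def power_divide)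
  moreover have "(4::'a) \<noteq> 0"
    using assms by (metis mult_2_right mult_eq_0_iff numeral_Bit0)
  ultimately have "x = 0 \<or> \<sigma> x = 0"
    by (simp add: power2_eq_square algebra_simps)
  then have "x = 0"
    using involutive[of x] by auto
  with \<open>x - \<sigma> x \<noteq> 0\<close> show False
    by simp
qed

lemma quad_map_quad_map_eq_0_if_ratio_eq_0:
  assumes "\<sigma> c = c" and "ratio x = 0"
  shows "quad_map c (quad_map c x) = 0"
proof -
  have "quad_map c x - \<sigma> (quad_map c x) = 0"
    using assms(2) by (auto simp: ratio_def quad_map_trace_and_difference(2)[OF assms(1)])
  then show ?thesis
    by (simp add: quad_map_def power2_eq_square)
qed

lemma odd_periodic_point_quad_map_eq_0:
  assumes "(2::'a) \<noteq> 0" and "\<sigma> c = c" and "c \<noteq> 0"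
    and "odd n" and "(quad_map c ^^ n) \<alpha> = \<alpha>"
  shows "\<alpha> = 0"
proof -
  have self_inverse: "inverse (ratio \<alpha>) = ratio \<alpha>"
    using ratio_funpow_quad_map[OF assms(2,3), of n \<alpha>] assms(4,5) by simp
  have "ratio \<alpha> = 0"
  proof (rule ccontr)
    assume "ratio \<alpha> \<noteq> 0"
    then have "ratio \<alpha> ^ 2 = 1"
      using right_inverse[of "ratio \<alpha>"] by (simp add: power2_eq_square self_inverse)
    with ratio_square_neq_1[OF assms(1)] show False
      by blast
  qed
  then have twice: "(quad_map c ^^ 2) \<alpha> = 0"
    using quad_map_quad_map_eq_0_if_ratio_eq_0[OF assms(2)] by (simp add: eval_nat_numeral)
  have periodic: "(quad_map c ^^ (n * m)) \<alpha> = \<alpha>" for m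
    by (induction m) (simp_all add: funpow_add assms(5))
  define m where "m = n * 2 - 2"
  have "n * 2 = m + 2"
    using odd_pos[OF assms(4)] unfolding m_def by simp
  then have "\<alpha> = (quad_map c ^^ (m + 2)) \<alpha>"
    using periodic[of 2] by simp
  also have "\<dots> = (quad_map c ^^ m) ((quad_map c ^^ 2) \<alpha>)"
    by (simp only: funpow_add o_apply)
  also have "\<dots> = 0"
    by (simp add: twice)
  finally show ?thesis .
qed

end

lemma field_involution_frobenius:
  assumes "q = CHAR('a::{field,finite}) ^ k" and "card (UNIV :: 'a set) = q ^ 2"
  shows "field_involution (\<lambda>x::'a. x ^ q)"
proof
  show "(x + y) ^ q = x ^ q + y ^ q" for x y :: 'a
    by (rule freshmans_dream'[OF prime_CHAR_finite_field assms(1)])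
  show "(x * y) ^ q = x ^ q * y ^ q" for x y :: 'a
    by (rule power_mult_distrib)
  show "(x ^ q) ^ q = x" for x :: 'a
    using power_card_eq_self[of x] assms(2) by (simp flip: power_mult add: power2_eq_square)
qed

theorem lemma8:
  fixes c \<alpha> :: "'a::{field,finite}" and p k q n :: nat and f :: "'a \<Rightarrow> 'a"
  assumes "prime p" and "odd p" and "k \<ge> 1" and "q = p ^ k"
    and "card (UNIV :: 'a set) = q ^ 2"
    and "c \<noteq> 0" and "c ^ q = c"
    and "f = (\<lambda>x. c * (x ^ (q + 1) - x ^ 2))"
    and "n > 1"
    and "\<forall>i<n. \<forall>j<n. i \<noteq> j \<longrightarrow> (f ^^ i) \<alpha> \<noteq> (f ^^ j) \<alpha>"
    and "(f ^^ n) \<alpha> = \<alpha>"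
  shows "even n"
proof (rule ccontr)
  assume "odd n"
  have char: "CHAR('a) = p"
    using CHAR_eq_prime_if_card_eq_prime_power assms(1,4,5) by (metis power_mult)
  interpret field_involution "\<lambda>x::'a. x ^ q"
    using field_involution_frobenius char assms(4,5) by blast
  have "f = quad_map c"
    by (simp add: assms(8) quad_map_def fun_eq_iff)
  moreover have "(2::'a) \<noteq> 0"
    by (rule two_neq_zero_if_odd_CHAR) (simp add: char assms(2))
  ultimately have "\<alpha> = 0"
    using odd_periodic_point_quad_map_eq_0 \<open>odd n\<close> assms(6,7,11) by blast
  then have "(f ^^ 1) \<alpha> = (f ^^ 0) \<alpha>"
    by (simp add: \<open>f = quad_map c\<close>)
  then show False
    using assms(9,10) by (metis zero_less_one less_trans zero_neq_one)
qed

end
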